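(* Let $T\in\mathbb{T}$. Then every alternating path in $T$ has length at most three.
   Context: $\mathbb{T}$ is the class of simple undirected weighted trees $T$ (nonzero real weights on edges) such that (i) $T$ has at least one non-pendant vertex, and (ii) every non-pendant vertex of $T$ is adjacent to at least one pendant vertex (a vertex of degree one). Given a maximum matching $M$ of $T$, a path is alternating with respect to $M$ if its edges are alternately in $M$ and not in $M$, with first and last edges in $M$; an alternating path in $T$ is a path alternating with respect to some maximum matching of $T$. *)

theory Defs
  imports Complex_Main
begin

definition simple_graph :: "'a set \<Rightarrow> 'a set set \<Rightarrow> bool" where
  "simple_graph V E \<longleftrightarrow> finite V \<and>
     (\<forall>e\<in>E. \<exists>u v. e = {u, v} \<and> u \<noteq> v \<and> u \<in> V \<and> v \<in> V)"

definition is_path :: "'a set \<Rightarrow> 'a set set \<Rightarrow> 'a list \<Rightarrow> bool" where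
  "is_path V E p \<longleftrightarrow> p \<noteq> [] \<and> set p \<subseteq> V \<and> distinct p \<and>
     (\<forall>i. Suc i < length p \<longrightarrow> {p ! i, p ! Suc i} \<in> E)"

definition path_length :: "'a list \<Rightarrow> nat" where
  "path_length p = length p - 1"

definition path_edge :: "'a list \<Rightarrow> nat \<Rightarrow> 'a set" where
  "path_edge p i = {p ! i, p ! Suc i}"

definition connected_graph :: "'a set \<Rightarrow> 'a set set \<Rightarrow> bool" where
  "connected_graph V E \<longleftrightarrow>
     (\<forall>u\<in>V. \<forall>v\<in>V. \<exists>p. is_path V E p \<and> hd p = u \<and> last p = v)"

definition is_cycle :: "'a set \<Rightarrow> 'a set set \<Rightarrow> 'a list \<Rightarrow> bool" where
  "is_cycle V E c \<longleftrightarrow> is_path V E c \<and> length c \<ge> 3 \<and> {last c, hd c} \<in> E"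

definition acyclic_graph :: "'a set \<Rightarrow> 'a set set \<Rightarrow> bool" where
  "acyclic_graph V E \<longleftrightarrow> (\<nexists>c. is_cycle V E c)"

definition is_tree :: "'a set \<Rightarrow> 'a set set \<Rightarrow> bool" where
  "is_tree V E \<longleftrightarrow> simple_graph V E \<and> V \<noteq> {} \<and> connected_graph V E \<and> acyclic_graph V E"

definition degree :: "'a set set \<Rightarrow> 'a \<Rightarrow> nat" where
  "degree E v = card {e \<in> E. v \<in> e}"

definition pendant :: "'a set set \<Rightarrow> 'a \<Rightarrow> bool" where
  "pendant E v \<longleftrightarrow> degree E v = 1"

definition in_class_T :: "'a set \<Rightarrow> 'a set set \<Rightarrow> ('a set \<Rightarrow> real) \<Rightarrow> bool" where
  "in_class_T V E w \<longleftrightarrow> is_tree V E \<and> (\<forall>e\<in>E. w e \<noteq> 0) \<and>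
     (\<exists>v\<in>V. \<not> pendant E v) \<and>
     (\<forall>v\<in>V. \<not> pendant E v \<longrightarrow> (\<exists>u\<in>V. {u, v} \<in> E \<and> pendant E u))"

definition matching :: "'a set set \<Rightarrow> 'a set set \<Rightarrow> bool" where
  "matching E M \<longleftrightarrow> M \<subseteq> E \<and> (\<forall>e1\<in>M. \<forall>e2\<in>M. e1 \<noteq> e2 \<longrightarrow> e1 \<inter> e2 = {})"

definition maximum_matching :: "'a set set \<Rightarrow> 'a set set \<Rightarrow> bool" where
  "maximum_matching E M \<longleftrightarrow> matching E M \<and>
     (\<forall>M'. matching E M' \<longrightarrow> card M' \<le> card M)"

definition alternating_path_wrt :: "'a set \<Rightarrow> 'a set set \<Rightarrow> 'a set set \<Rightarrow> 'a list \<Rightarrow> bool" where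
  "alternating_path_wrt V E M p \<longleftrightarrow> is_path V E p \<and> path_length p \<ge> 1 \<and>
     (\<forall>i < path_length p. (path_edge p i \<in> M \<longleftrightarrow> even i)) \<and>
     path_edge p (path_length p - 1) \<in> M"

definition alternating_path :: "'a set \<Rightarrow> 'a set set \<Rightarrow> 'a list \<Rightarrow> bool" where
  "alternating_path V E p \<longleftrightarrow> (\<exists>M. maximum_matching E M \<and> alternating_path_wrt V E M p)"

end

theory Submission
  imports Defs
begin

text \<open>An alternating path with at least four edges has a matched edge \<open>{a, b}\<close> in its
  interior (its third edge). Both \<open>a\<close> and \<open>b\<close> lie inside the path, so neither is pendant, and
  in a tree of class \<open>\<T>\<close> each of them has a pendant neighbour, \<open>u\<close> resp. \<open>v\<close>. These pendant
  vertices are unmatched, so \<open>u a b v\<close> is an augmenting path: replacing \<open>{a, b}\<close> by \<open>{u, a}\<close> and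
  \<open>{v, b}\<close> yields a larger matching, contradicting maximality.\<close>

lemma simple_graph_finite_edges:
  assumes "simple_graph V E"
  shows "finite E"
proof -
  have "E \<subseteq> Pow V"
    using assms unfolding simple_graph_def by fastforce
  moreover have "finite V"
    using assms by (simp add: simple_graph_def)
  ultimately show ?thesis
    by (meson finite_Pow_iff finite_subset)
qed

lemma simple_graph_edge_neq:
  assumes "simple_graph V E" "{x, y} \<in> E"
  shows "x \<noteq> y"
  using assms unfolding simple_graph_def by (metis doubleton_eq_iff)

lemma pendant_incident_edges_eq:
  assumes "pendant E u" "e1 \<in> E" "e2 \<in> E" "u \<in> e1" "u \<in> e2"
  shows "e1 = e2"
proof -
  have "card {e \<in> E. u \<in> e} = 1"
    using assms(1) by (simp add: pendant_def degree_def)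
  then obtain e where "{e \<in> E. u \<in> e} = {e}"
    by (metis One_nat_def card_1_singleton_iff)
  moreover have "e1 \<in> {e \<in> E. u \<in> e}" "e2 \<in> {e \<in> E. u \<in> e}"
    using assms(2-5) by simp_all
  ultimately show ?thesis
    by simp
qed

lemma path_interior_vertex_not_pendant:
  assumes "is_path V E p" "0 < i" "Suc i < length p"
  shows "\<not> pendant E (p ! i)"
proof
  assume "pendant E (p ! i)"
  have edge: "{p ! j, p ! Suc j} \<in> E" if "Suc j < length p" for j
    using assms(1) that by (simp add: is_path_def)
  have "{p ! (i - 1), p ! i} \<in> E" "{p ! i, p ! Suc i} \<in> E"
    using edge[of "i - 1"] edge[of i] assms(2,3) by simp_all
  with \<open>pendant E (p ! i)\<close> have "{p ! (i - 1), p ! i} = {p ! i, p ! Suc i}"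
    by (rule pendant_incident_edges_eq) simp_all
  moreover have "p ! (i - 1) \<noteq> p ! i" "p ! (i - 1) \<noteq> p ! Suc i"
    using assms unfolding is_path_def by (simp_all add: nth_eq_iff_index_eq)
  ultimately show False
    by (simp add: doubleton_eq_iff)
qed

lemma matching_disjoint:
  assumes "matching E M" "e1 \<in> M" "e2 \<in> M" "e1 \<noteq> e2"
  shows "e1 \<inter> e2 = {}"
  using assms unfolding matching_def by blast

lemma matching_subset:
  assumes "matching E M" "M' \<subseteq> M"
  shows "matching E M'"
  using assms unfolding matching_def by blast

lemma matching_insert:
  assumes "matching E M" "e \<in> E" "\<And>f. f \<in> M \<Longrightarrow> e \<inter> f = {}"
  shows "matching E (insert e M)"
  using assms unfolding matching_def by (metis Int_commute insert_iff insert_subset)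

lemma matching_augment:
  assumes "matching E M" "{a, b} \<in> M" "a \<noteq> b"
    and "{u, a} \<in> E" "{v, b} \<in> E" "u \<notin> \<Union>M" "v \<notin> \<Union>M" "u \<noteq> v"
  shows "matching E (insert {u, a} (insert {v, b} (M - {{a, b}})))"
proof -
  have avoid: "a \<notin> f" "b \<notin> f" "u \<notin> f" "v \<notin> f" if "f \<in> M - {{a, b}}" for f
  proof -
    have "f \<inter> {a, b} = {}"
      using that by (intro matching_disjoint[OF assms(1) _ assms(2)]) auto
    then show "a \<notin> f" "b \<notin> f"
      by auto
    show "u \<notin> f" "v \<notin> f"
      using assms(6,7) that by auto
  qed
  have "u \<noteq> b" "v \<noteq> a"
    using assms(2,6,7) by blast+
  have "matching E (M - {{a, b}})"
    using assms(1) by (rule matching_subset) blast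
  then have "matching E (insert {v, b} (M - {{a, b}}))"
    using assms(5) by (rule matching_insert) (use avoid(2,4) in blast)
  then show ?thesis
    using assms(4) by (rule matching_insert)
      (use assms(3,8) \<open>u \<noteq> b\<close> \<open>v \<noteq> a\<close> avoid(1,3) in auto)
qed

lemma card_matching_augment:
  assumes "finite M" "{a, b} \<in> M" "u \<notin> \<Union>M" "v \<notin> \<Union>M" "u \<noteq> v"
  shows "card (insert {u, a} (insert {v, b} (M - {{a, b}}))) = card M + 1"
proof -
  have "{u, a} \<notin> M" "{v, b} \<notin> M" "{u, a} \<noteq> {v, b}"
    using assms(2-5) by (auto simp: doubleton_eq_iff)
  then have "card (insert {u, a} (insert {v, b} (M - {{a, b}}))) = card (M - {{a, b}}) + 2"
    using assms(1) by simp
  also have "\<dots> = card M + 1"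
    using assms(1,2) card_gt_0_iff[of M] by (auto simp: card_Diff_singleton)
  finally show ?thesis .
qed

lemma maximum_matching_no_augmenting_path3:
  assumes "finite E" "maximum_matching E M" "{a, b} \<in> M" "a \<noteq> b"
    and "{u, a} \<in> E" "{v, b} \<in> E" "u \<notin> \<Union>M" "v \<notin> \<Union>M" "u \<noteq> v"
  shows False
proof -
  have "matching E M" and maximal: "\<And>M'. matching E M' \<Longrightarrow> card M' \<le> card M"
    using assms(2) by (auto simp: maximum_matching_def)
  then have "finite M"
    using assms(1) by (auto simp: matching_def intro: finite_subset)
  from maximal[OF matching_augment[OF \<open>matching E M\<close> assms(3-9)]]
    card_matching_augment[OF \<open>finite M\<close> assms(3,7-9)]
  show False
    by simp
qed

lemma pendant_neighbour_unmatched: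
  assumes "matching E M" "{a, b} \<in> M" "pendant E u" "{u, a} \<in> E" "u \<notin> {a, b}"
  shows "u \<notin> \<Union>M"
proof
  assume "u \<in> \<Union>M"
  then obtain e where "e \<in> M" "u \<in> e"
    by blast
  moreover have "M \<subseteq> E"
    using assms(1) by (simp add: matching_def)
  ultimately have "e = {u, a}"
    using pendant_incident_edges_eq[OF assms(3)] assms(4) by blast
  with assms(5) have "e \<noteq> {a, b}" "e \<inter> {a, b} \<noteq> {}"
    by auto
  with matching_disjoint[OF assms(1) \<open>e \<in> M\<close> assms(2)] show False
    by blast
qed

lemma maximum_matching_edge_not_between_pendant_neighbours:
  assumes "simple_graph V E" "maximum_matching E M" "{a, b} \<in> M"
    and "\<not> pendant E a" "\<not> pendant E b"
    and "pendant E u" "{u, a} \<in> E" "pendant E v" "{v, b} \<in> E"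
  shows False
proof -
  have "matching E M"
    using assms(2) by (simp add: maximum_matching_def)
  then have "{a, b} \<in> E"
    using assms(3) by (auto simp: matching_def)
  then have "a \<noteq> b"
    by (rule simple_graph_edge_neq[OF assms(1)])
  have "u \<noteq> a" "v \<noteq> b"
    by (rule simple_graph_edge_neq[OF assms(1,7)] simple_graph_edge_neq[OF assms(1,9)])+
  moreover have "u \<noteq> b" "v \<noteq> a"
    using assms(4-6,8) by blast+
  ultimately have "u \<notin> \<Union>M" "v \<notin> \<Union>M"
    using pendant_neighbour_unmatched[OF \<open>matching E M\<close> assms(3,6,7)]
      pendant_neighbour_unmatched[OF \<open>matching E M\<close> _ assms(8,9), of a] assms(3)
    by (simp_all add: insert_commute)
  moreover have "u \<noteq> v"
  proof
    assume "u = v"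
    then have "{u, a} = {u, b}"
      using pendant_incident_edges_eq[OF assms(6,7,9)] by simp
    with \<open>a \<noteq> b\<close> show False
      by (simp add: doubleton_eq_iff)
  qed
  ultimately show False
    by (rule maximum_matching_no_augmenting_path3[OF simple_graph_finite_edges[OF assms(1)]
          assms(2,3) \<open>a \<noteq> b\<close> assms(7,9)])
qed

theorem corollary3p4:
  fixes V :: "'a set" and E :: "'a set set" and w :: "'a set \<Rightarrow> real" and p :: "'a list"
  assumes "in_class_T V E w"
    and "alternating_path V E p"
  shows "path_length p \<le> 3"
proof (rule ccontr)
  assume "\<not> path_length p \<le> 3"
  then have "5 \<le> length p"
    by (simp add: path_length_def)
  obtain M where "maximum_matching E M" and alt: "alternating_path_wrt V E M p"
    using assms(2) unfolding alternating_path_def by blast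
  have "simple_graph V E"
    and pendant_neighbour: "\<And>x. x \<in> V \<Longrightarrow> \<not> pendant E x \<Longrightarrow> \<exists>u. pendant E u \<and> {u, x} \<in> E"
    using assms(1) unfolding in_class_T_def is_tree_def by blast+
  have "is_path V E p"
    using alt by (simp add: alternating_path_wrt_def)
  have "{p ! 2, p ! 3} \<in> M"
    using alt \<open>5 \<le> length p\<close>
    by (auto simp: alternating_path_wrt_def path_length_def path_edge_def numeral_eq_Suc)
  have "\<not> pendant E (p ! 2)" "\<not> pendant E (p ! 3)"
    using path_interior_vertex_not_pendant[OF \<open>is_path V E p\<close>] \<open>5 \<le> length p\<close> by simp_all
  moreover have "p ! 2 \<in> V" "p ! 3 \<in> V"
    using \<open>is_path V E p\<close> \<open>5 \<le> length p\<close> by (auto simp: is_path_def)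
  ultimately obtain u v where "pendant E u" "{u, p ! 2} \<in> E" "pendant E v" "{v, p ! 3} \<in> E"
    using pendant_neighbour by meson
  with \<open>simple_graph V E\<close> \<open>maximum_matching E M\<close> \<open>{p ! 2, p ! 3} \<in> M\<close>
    \<open>\<not> pendant E (p ! 2)\<close> \<open>\<not> pendant E (p ! 3)\<close>
  show False
    by (rule maximum_matching_edge_not_between_pendant_neighbours)
qed

end
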